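(* Let $k\ge 2$ and let $p,q$ be real polynomials with $\deg p=k$, $\deg q=k-1$, all of whose roots are real and simple and strictly interlace. For each $\alpha\in\mathbb{R}$ let $p_1(\alpha)<\dots<p_k(\alpha)$ be the roots of $p+\alpha q$ (these are real and simple), let $D_j(\alpha)$ ($1\le j\le k-1$) be the open disk having $[p_j(\alpha),p_{j+1}(\alpha)]$ as a diameter, $D_0(\alpha)$ the open disk having $[p_1(\alpha),p_k(\alpha)]$ as a diameter, and $\Omega_p(\alpha)=\overline{D_0(\alpha)}\setminus\bigcup_{j=1}^{k-1}D_j(\alpha)$. Then all roots of $W(p,q)=p'q-q'p$ lie in $\bigcap_{\alpha\in\mathbb{R}}\Omega_p(\alpha)$.
   Context: "Strictly interlace" means that between any two consecutive roots of $p$ there is exactly one root of $q$ and vice versa: $p_1<q_1<p_2<\dots<q_{k-1}<p_k$. A disk "having a segment $[a,b]$ as a diameter" is the disk centered at $\frac{a+b}2$ of radius $\frac{b-a}2$. *)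

theory Defs
  imports "HOL-Analysis.Analysis" "HOL-Computational_Algebra.Polynomial"
begin

definition real_simple_rooted :: "real poly \<Rightarrow> bool" where
  "real_simple_rooted p \<longleftrightarrow> p \<noteq> 0 \<and>
     (\<forall>z. poly (map_poly complex_of_real p) z = 0 \<longrightarrow> Im z = 0) \<and>
     (\<forall>x. poly p x = 0 \<longrightarrow> order x p = 1)"

definition sorted_roots :: "real poly \<Rightarrow> real list" where
  "sorted_roots p = sorted_list_of_set {x. poly p x = 0}"

definition strictly_interlace :: "real poly \<Rightarrow> real poly \<Rightarrow> bool" where
  "strictly_interlace p q \<longleftrightarrow>
     (let ps = sorted_roots p; qs = sorted_roots q in
       length qs + 1 = length ps \<and>
       (\<forall>i < length qs. ps ! i < qs ! i \<and> qs ! i < ps ! (i + 1)))"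

definition diam_disk :: "real \<Rightarrow> real \<Rightarrow> complex set" where
  "diam_disk a b = ball (complex_of_real ((a + b) / 2)) ((b - a) / 2)"

(* Omega_p(alpha) = closure D_0 minus union of D_j, with r = sorted roots of p + alpha q
   (0-based indices: r!0 = p_1, r!(k-1) = p_k) *)
definition Omega :: "real poly \<Rightarrow> real poly \<Rightarrow> real \<Rightarrow> complex set" where
  "Omega p q \<alpha> =
     (let r = sorted_roots (p + smult \<alpha> q); k = length r in
       closure (diam_disk (r ! 0) (r ! (k - 1))) -
       (\<Union>j \<in> {0..<k - 1}. diam_disk (r ! j) (r ! (j + 1))))"

definition wronskian :: "real poly \<Rightarrow> real poly \<Rightarrow> real poly" where
  "wronskian p q = pderiv p * q - pderiv q * p"

end

theory Submission
  imports Defs "HOL-Computational_Algebra.Fundamental_Theorem_Algebra"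
begin

(* Write W = W(p,q), L = lead_coeff p, M = lead_coeff q and P_a = p + a q; then W(P_a,q) = W.

   1. Lagrange interpolation: if P = L * prod_{t in R} (x - t) for a finite set R and deg Q < |R|,
      then W(P,Q) = sum_{t in R} w_t P_t^2, where P_t = prod_{u in R - {t}} (x - u) and
      w_t = W(P,Q)(t) / P_t(t)^2.  Consequently, if sigma W(P,Q) > 0 at the roots of P then
      sigma W(P,Q) > 0 on the whole real line, and every complex zero z of W(P,Q) is non-real
      and satisfies sum_t c_t / (z - t)^2 = 0 with weights c_t > 0.
   2. Counting signs of products, strict interlacing gives sigma = L M this property for P = p,
      so sigma W > 0 on the real line.
   3. At a root s of q we have W(s) = - q'(s) P_a(s); hence P_a alternates in sign at the roots
      of q and has k real roots, so step 1 also applies to P = P_a.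
   4. Geometry: a balance sum_t c_t / (z - t)^2 = 0 with c_t > 0 and z non-real forbids all the
      t to lie weakly on one side (inside or outside) of a circle through z centred on the real
      line, with one of them strictly.  This puts z outside every disk on two consecutive roots
      of P_a and inside the closed disk on its extreme roots, i.e. z lies in Omega_p(a). *)

abbreviation cp :: "real poly \<Rightarrow> complex poly" where "cp \<equiv> map_poly complex_of_real"

lemma cp_add: "cp (p + q) = cp p + cp q"
  by (rule poly_eqI) (simp add: coeff_map_poly)

lemma cp_mult: "cp (p * q) = cp p * cp q"
  by (rule poly_eqI) (simp add: coeff_map_poly coeff_mult)

lemma cp_smult: "cp (smult c p) = smult (of_real c) (cp p)"
  by (rule poly_eqI) (simp add: coeff_map_poly)

lemma cp_sum: "cp (sum f A) = (\<Sum>x\<in>A. cp (f x))"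
  by (induction A rule: infinite_finite_induct) (simp_all add: cp_add)

lemma cp_prod: "cp (prod f A) = (\<Prod>x\<in>A. cp (f x))"
  by (induction A rule: infinite_finite_induct) (simp_all add: cp_mult)

lemma cp_power: "cp (p ^ n) = cp p ^ n"
  by (induction n) (simp_all add: cp_mult)

lemma poly_cp_of_real: "poly (cp p) (complex_of_real x) = complex_of_real (poly p x)"
  by (induction p) (auto simp: map_poly_pCons)

section \<open>Splitting off the real roots\<close>

lemma roots_product_dvd:
  fixes P :: "real poly"
  assumes "finite R" "\<forall>t\<in>R. poly P t = 0"
  shows "(\<Prod>t\<in>R. [:-t,1:]) dvd P"
  using assms
proof (induction R arbitrary: P rule: finite_induct)
  case empty then show ?case by simp
next
  case (insert a R)
  have "[:-a,1:] dvd P" using insert.prems by (simp add: dvd_iff_poly_eq_0)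
  then obtain P' where P': "P = [:-a,1:] * P'" by (elim dvdE)
  have "\<forall>t\<in>R. poly P' t = 0"
    using insert.prems insert.hyps(2) unfolding P' by auto
  hence "(\<Prod>t\<in>R. [:-t,1:]) dvd P'" by (rule insert.IH)
  hence "[:-a,1:] * (\<Prod>t\<in>R. [:-t,1:]) dvd [:-a,1:] * P'" by (rule mult_dvd_mono[OF dvd_refl])
  thus ?case using insert.hyps P' by simp
qed

lemma degree_roots_product: "finite R \<Longrightarrow> degree (\<Prod>t\<in>R. [:-t,1::real:]) = card R"
  by (subst degree_prod_eq_sum_degree) auto

lemma lead_coeff_roots_product: "lead_coeff (\<Prod>t\<in>R. [:-t,1::real:]) = 1"
  by (simp add: lead_coeff_prod)

lemma roots_product_nonzero: "(\<Prod>t\<in>R. [:-t,1::real:]) \<noteq> 0"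
  using lead_coeff_roots_product[of R] by auto

lemma split_off_roots:
  fixes P :: "real poly"
  assumes "P \<noteq> 0"
  obtains g where "P = (\<Prod>t\<in>{x. poly P x = 0}. [:-t,1:]) * g"
    and "degree P = card {x. poly P x = 0} + degree g"
proof -
  define R where "R = {x. poly P x = 0}"
  have fin: "finite R" using poly_roots_finite[OF assms] by (simp add: R_def)
  have "(\<Prod>t\<in>R. [:-t,1:]) dvd P" by (rule roots_product_dvd[OF fin]) (simp add: R_def)
  then obtain g where g: "P = (\<Prod>t\<in>R. [:-t,1:]) * g" by (elim dvdE)
  have "g \<noteq> 0" using assms g by auto
  hence "degree P = card R + degree g"
    unfolding g by (simp add: degree_mult_eq roots_product_nonzero degree_roots_product[OF fin])
  with g show ?thesis using that unfolding R_def by blast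
qed

lemma factor_by_roots:
  fixes P :: "real poly"
  assumes "P \<noteq> 0" "card {x. poly P x = 0} = degree P"
  shows "P = smult (lead_coeff P) (\<Prod>t\<in>{x. poly P x = 0}. [:-t,1:])"
proof -
  obtain g where g: "P = (\<Prod>t\<in>{x. poly P x = 0}. [:-t,1:]) * g"
    and dg: "degree P = card {x. poly P x = 0} + degree g"
    using split_off_roots[OF assms(1)] by blast
  obtain c where c: "g = [:c:]" using dg assms(2) by (metis add_cancel_left_right degree_eq_zeroE)
  have "lead_coeff P = c"
    using arg_cong[OF g, of lead_coeff] by (simp add: lead_coeff_mult lead_coeff_roots_product c)
  thus ?thesis using g c by simp
qed

lemma real_simple_rooted_card:
  assumes rsr: "real_simple_rooted P"
  shows "card {x. poly P x = 0} = degree P"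
proof -
  have P0: "P \<noteq> 0" using rsr by (simp add: real_simple_rooted_def)
  obtain g where g: "P = (\<Prod>t\<in>{x. poly P x = 0}. [:-t,1:]) * g"
    and dg: "degree P = card {x. poly P x = 0} + degree g"
    using split_off_roots[OF P0] by blast
  have "degree g = 0"
  proof (rule ccontr)
    assume "degree g \<noteq> 0"
    then obtain z where z: "poly (cp g) z = 0"
      using alg_closed_imp_poly_has_root[of "cp g"] by (auto simp: degree_map_poly)
    have "poly (cp P) z = 0" using z by (subst g) (simp add: cp_mult)
    hence "Im z = 0" using rsr by (simp add: real_simple_rooted_def)
    hence "z = complex_of_real (Re z)" by (simp add: complex_eq_iff)
    hence gx: "poly g (Re z) = 0" using z poly_cp_of_real[of g "Re z"] by simp
    hence Px: "poly P (Re z) = 0" by (subst g) simp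
    have "poly (\<Prod>t\<in>{x. poly P x = 0}. [:-t,1:]) (Re z) = 0"
      using Px poly_roots_finite[OF P0] by (simp add: poly_prod)
    hence "order (Re z) (\<Prod>t\<in>{x. poly P x = 0}. [:-t,1:]) \<noteq> 0"
      using roots_product_nonzero by (simp add: order_root)
    moreover have "order (Re z) g \<noteq> 0"
      using gx g P0 order_root[of g "Re z"] by (metis mult_zero_right)
    ultimately have "order (Re z) P \<ge> 2"
      using P0 by (subst g, subst order_mult) (use g in auto)
    moreover have "order (Re z) P = 1" using rsr Px by (simp add: real_simple_rooted_def)
    ultimately show False by simp
  qed
  thus ?thesis using dg by simp
qed

lemma real_simple_rooted_factor:
  assumes "real_simple_rooted P"
  shows "finite {x. poly P x = 0}" "card {x. poly P x = 0} = degree P"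
    "P = smult (lead_coeff P) (\<Prod>t\<in>{x. poly P x = 0}. [:-t,1:])"
proof -
  have P0: "P \<noteq> 0" using assms by (simp add: real_simple_rooted_def)
  show "finite {x. poly P x = 0}" by (rule poly_roots_finite[OF P0])
  show c: "card {x. poly P x = 0} = degree P" by (rule real_simple_rooted_card[OF assms])
  show "P = smult (lead_coeff P) (\<Prod>t\<in>{x. poly P x = 0}. [:-t,1:])"
    by (rule factor_by_roots[OF P0 c])
qed

section \<open>Signs of products of linear factors\<close>

(* The number of points of R to the right of x; it fixes the sign of prod_{u in R} (x - u). *)
definition count_above :: "real set \<Rightarrow> real \<Rightarrow> nat" where
  "count_above R x = card {u\<in>R. x < u}"

lemma neg_one_power_square: "(-1::real) ^ n * (-1) ^ n = 1"
  by (simp flip: power_mult_distrib)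

lemma neg_by_pos_factor: "(a::real) * b < 0 \<Longrightarrow> a > 0 \<Longrightarrow> b < 0"
  by (simp add: mult_less_0_iff)

lemma mult_by_square_pos: "(L::real) \<noteq> 0 \<Longrightarrow> X > 0 \<Longrightarrow> L * (L * X) > 0"
proof -
  assume "L \<noteq> 0" "X > 0"
  hence "L * L > 0" by (metis not_real_square_gt_zero)
  thus ?thesis using \<open>X > 0\<close> by (simp add: mult.assoc[symmetric])
qed

lemma product_sign:
  fixes R :: "real set"
  assumes "finite R" "x \<notin> R"
  shows "(\<Prod>t\<in>R. x - t) * (-1) ^ count_above R x > 0"
  using assms unfolding count_above_def
proof (induction R rule: finite_induct)
  case empty then show ?case by simp
next
  case (insert a R)
  have IH: "(\<Prod>t\<in>R. x - t) * (-1) ^ card {t\<in>R. x < t} > 0" using insert by simp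
  have fin: "finite {t\<in>R. x < t}" using insert.hyps by simp
  show ?case
  proof (cases "x < a")
    case True
    have "{t\<in>insert a R. x < t} = insert a {t\<in>R. x < t}" using True by auto
    hence "card {t\<in>insert a R. x < t} = Suc (card {t\<in>R. x < t})"
      using insert.hyps fin by simp
    moreover have "(a - x) * ((\<Prod>t\<in>R. x - t) * (-1) ^ card {t\<in>R. x < t}) > 0"
      using True IH by simp
    ultimately show ?thesis using insert.hyps by (simp add: algebra_simps)
  next
    case False
    hence "x > a" using insert.prems by simp
    moreover have "{t\<in>insert a R. x < t} = {t\<in>R. x < t}" using False by auto
    ultimately show ?thesis using insert.hyps IH by (simp add: mult.assoc)
  qed
qed

definition cofactor :: "real set \<Rightarrow> real \<Rightarrow> real poly" where
  "cofactor R t = (\<Prod>u\<in>R - {t}. [:-u,1:])"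

lemma poly_cofactor: "poly (cofactor R t) x = (\<Prod>u\<in>R - {t}. x - u)"
  by (simp add: cofactor_def poly_prod)

lemma cofactor_at_own_root: "finite R \<Longrightarrow> poly (cofactor R t) t \<noteq> 0"
  by (simp add: poly_cofactor)

lemma cofactor_at_other_root: "finite R \<Longrightarrow> s \<in> R \<Longrightarrow> s \<noteq> t \<Longrightarrow> poly (cofactor R t) s = 0"
  by (simp add: poly_cofactor prod_zero_iff)

lemma degree_cofactor: "finite R \<Longrightarrow> t \<in> R \<Longrightarrow> degree (cofactor R t) = card R - 1"
  unfolding cofactor_def by (simp add: degree_roots_product)

lemma roots_product_split:
  "finite R \<Longrightarrow> t \<in> R \<Longrightarrow> (\<Prod>u\<in>R. [:-u,1:]) = [:-t,1:] * cofactor R t"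
  unfolding cofactor_def by (simp add: prod.remove)

lemma pderiv_at_root:
  assumes "finite R" "t \<in> R" "P = smult L (\<Prod>u\<in>R. [:-u,1:])"
  shows "poly (pderiv P) t = L * poly (cofactor R t) t"
proof -
  have P: "P = smult L ([:-t,1:] * cofactor R t)" using assms roots_product_split by simp
  have "pderiv [:-t,1::real:] = 1" by (simp add: pderiv_pCons)
  hence "pderiv P = smult L ([:-t,1:] * pderiv (cofactor R t) + cofactor R t)"
    unfolding P pderiv_smult pderiv_mult by (simp only: mult_1_right)
  thus ?thesis by simp
qed

lemma pderiv_sign_at_root:
  assumes "finite R" "t \<in> R" "P = smult L (\<Prod>u\<in>R. [:-u,1:])" "L \<noteq> 0"
  shows "poly (pderiv P) t * L * (-1) ^ count_above R t > 0"
proof -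
  have "count_above (R - {t}) t = count_above R t"
    unfolding count_above_def by (metis (lifting) Diff_iff less_irrefl singletonD)
  hence pos: "poly (cofactor R t) t * (-1) ^ count_above R t > 0"
    using product_sign[of "R - {t}" t] assms(1) by (simp add: poly_cofactor)
  have "poly (pderiv P) t * L * (-1) ^ count_above R t
      = L * (L * (poly (cofactor R t) t * (-1) ^ count_above R t))"
    unfolding pderiv_at_root[OF assms(1-3)] by (simp only: mult_ac)
  also have "\<dots> > 0" by (rule mult_by_square_pos[OF assms(4) pos])
  finally show ?thesis .
qed

lemma poly_sign_off_roots:
  assumes "finite R" "x \<notin> R" "P = smult L (\<Prod>u\<in>R. [:-u,1:])" "L \<noteq> 0"
  shows "poly P x * L * (-1) ^ count_above R x > 0"
  using mult_by_square_pos[OF assms(4) product_sign[OF assms(1,2)]] assms(3)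
  by (simp add: poly_prod mult_ac)

section \<open>The Wronskian as a weighted sum of squares\<close>

lemma pderiv_sum: "pderiv (sum f A) = (\<Sum>x\<in>A. pderiv (f x))"
  by (induction A rule: infinite_finite_induct) (simp_all add: pderiv_add)

lemma wronskian_sum_right:
  "wronskian P (\<Sum>t\<in>A. smult (c t) (f t)) = (\<Sum>t\<in>A. smult (c t) (wronskian P (f t)))"
  unfolding wronskian_def pderiv_sum
  by (simp add: pderiv_smult sum_distrib_left sum_distrib_right smult_diff_right flip: sum_subtractf)

lemma wronskian_pencil: "wronskian (p + smult a q) q = wronskian p q"
  unfolding wronskian_def by (simp add: pderiv_add pderiv_smult algebra_simps)

lemma wronskian_cofactor:
  assumes "finite R" "t \<in> R" "P = smult L (\<Prod>u\<in>R. [:-u,1:])"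
  shows "wronskian P (cofactor R t) = smult L ((cofactor R t)^2)"
proof -
  have P: "P = smult L ([:-t,1:] * cofactor R t)" using assms roots_product_split by simp
  have "pderiv [:-t,1::real:] = 1" by (simp add: pderiv_pCons)
  hence d: "pderiv ([:-t,1:] * cofactor R t) = cofactor R t + [:-t,1:] * pderiv (cofactor R t)"
    by (simp only: pderiv_mult mult_1_right add.commute)
  have "smult L (A + X * B) * A - B * smult L (X * A) = smult L (A^2)" for A B X :: "real poly"
    by (simp add: algebra_simps power2_eq_square smult_add_right)
  thus ?thesis unfolding P wronskian_def pderiv_smult d .
qed

lemma lagrange_interpolation:
  assumes fin: "finite R" and dQ: "degree Q < card R"
  shows "Q = (\<Sum>t\<in>R. smult (poly Q t / poly (cofactor R t) t) (cofactor R t))"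
proof (rule ccontr)
  define G where "G = (\<Sum>t\<in>R. smult (poly Q t / poly (cofactor R t) t) (cofactor R t))"
  assume "Q \<noteq> G"
  hence nz: "Q - G \<noteq> 0" by simp
  have "degree G \<le> card R - 1" unfolding G_def
    by (rule degree_sum_le[OF fin]) (metis degree_cofactor degree_smult_le fin order.trans)
  hence dg: "degree (Q - G) < card R" using dQ degree_diff_le_max[of Q G] by linarith
  have "R \<subseteq> {x. poly (Q - G) x = 0}"
  proof
    fix s assume sR: "s \<in> R"
    have "(\<Sum>t\<in>R - {s}. poly Q t / poly (cofactor R t) t * poly (cofactor R t) s) = 0"
      using cofactor_at_other_root[OF fin sR] by (intro sum.neutral) auto
    hence "poly G s = poly Q s / poly (cofactor R s) s * poly (cofactor R s) s"
      by (simp add: G_def poly_sum sum.remove[OF fin sR])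
    thus "s \<in> {x. poly (Q - G) x = 0}" using cofactor_at_own_root[OF fin] by simp
  qed
  hence "card R \<le> card {x. poly (Q - G) x = 0}" by (rule card_mono[OF poly_roots_finite[OF nz]])
  also have "\<dots> \<le> degree (Q - G)" by (rule card_poly_roots_bound[OF nz])
  finally show False using dg by simp
qed

lemma wronskian_sum_of_squares:
  assumes fin: "finite R" and P: "P = smult L (\<Prod>u\<in>R. [:-u,1:])" and dQ: "degree Q < card R"
  defines "w t \<equiv> poly (wronskian P Q) t / (poly (cofactor R t) t)^2"
  shows "wronskian P Q = (\<Sum>t\<in>R. smult (w t) ((cofactor R t)^2))"
proof -
  define c where "c t = L * (poly Q t / poly (cofactor R t) t)" for t
  have "wronskian P Q
      = wronskian P (\<Sum>t\<in>R. smult (poly Q t / poly (cofactor R t) t) (cofactor R t))"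
    using lagrange_interpolation[OF fin dQ] by simp
  also have "\<dots> = (\<Sum>t\<in>R. smult (c t) ((cofactor R t)^2))"
    unfolding wronskian_sum_right
    by (rule sum.cong[OF refl]) (simp add: wronskian_cofactor[OF fin _ P] c_def mult.commute)
  finally have W: "wronskian P Q = (\<Sum>t\<in>R. smult (c t) ((cofactor R t)^2))" .
  have "c t = w t" if tR: "t \<in> R" for t
  proof -
    have "(\<Sum>u\<in>R - {t}. c u * (poly (cofactor R u) t)^2) = 0"
      using cofactor_at_other_root[OF fin tR] by (intro sum.neutral) auto
    hence "poly (wronskian P Q) t = c t * (poly (cofactor R t) t)^2"
      by (subst W) (simp add: poly_sum sum.remove[OF fin tR])
    thus ?thesis using cofactor_at_own_root[OF fin] by (simp add: w_def)
  qed
  thus ?thesis using W by simp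
qed

lemma wronskian_definite:
  assumes fin: "finite R" and P: "P = smult L (\<Prod>u\<in>R. [:-u,1:])" and dQ: "degree Q < card R"
    and sign: "\<forall>t\<in>R. poly (wronskian P Q) t * \<sigma> > 0"
  shows "poly (wronskian P Q) x * \<sigma> > 0"
proof -
  define w where "w t = poly (wronskian P Q) t / (poly (cofactor R t) t)^2" for t
  have wpos: "w t * \<sigma> > 0" if "t \<in> R" for t
    using sign that cofactor_at_own_root[OF fin] by (simp add: w_def)
  have Rne: "R \<noteq> {}" using dQ by auto
  obtain t0 where t0: "t0 \<in> R" "x \<notin> R - {t0}"
    using Rne by (cases "x \<in> R") auto
  have "poly (cofactor R t0) x \<noteq> 0" using t0 fin by (simp add: poly_cofactor)
  hence "(\<Sum>t\<in>R. w t * \<sigma> * (poly (cofactor R t) x)^2) > 0"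
  proof (intro sum_pos2[OF fin t0(1)])
    show "0 \<le> w t * \<sigma> * (poly (cofactor R t) x)^2" if "t \<in> R" for t
      using wpos[OF that] by simp
  qed (use wpos[OF t0(1)] in simp)
  also have "(\<Sum>t\<in>R. w t * \<sigma> * (poly (cofactor R t) x)^2) = poly (wronskian P Q) x * \<sigma>"
    by (subst wronskian_sum_of_squares[OF fin P dQ])
       (simp add: w_def poly_sum sum_distrib_left sum_distrib_right mult_ac)
  finally show ?thesis .
qed

lemma wronskian_complex_zero:
  assumes fin: "finite R" and P: "P = smult L (\<Prod>u\<in>R. [:-u,1:])" and dQ: "degree Q < card R"
    and sign: "\<forall>t\<in>R. poly (wronskian P Q) t * \<sigma> > 0"
    and z: "poly (cp (wronskian P Q)) z = 0"
  shows "Im z \<noteq> 0"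
    and "(\<Sum>t\<in>R. complex_of_real (poly (wronskian P Q) t * \<sigma> / (poly (cofactor R t) t)^2)
          / (z - complex_of_real t)^2) = 0"
proof -
  show nonreal: "Im z \<noteq> 0"
  proof
    assume "Im z = 0"
    hence "z = complex_of_real (Re z)" by (simp add: complex_eq_iff)
    hence "poly (wronskian P Q) (Re z) = 0" using z poly_cp_of_real by (metis of_real_eq_0_iff)
    thus False using wronskian_definite[OF fin P dQ sign, of "Re z"] by simp
  qed
  define w where "w t = poly (wronskian P Q) t / (poly (cofactor R t) t)^2" for t
  define D where "D = (\<Prod>u\<in>R. z - complex_of_real u)"
  have nz: "z - complex_of_real u \<noteq> 0" for u using nonreal by (auto simp: complex_eq_iff)
  have D0: "D \<noteq> 0" unfolding D_def using nz fin by simp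
  have cof: "poly (cp (cofactor R t)) z = D / (z - complex_of_real t)" if "t \<in> R" for t
  proof -
    have "D = (z - complex_of_real t) * (\<Prod>u\<in>R - {t}. z - complex_of_real u)"
      unfolding D_def using fin that by (simp add: prod.remove)
    thus ?thesis using nz[of t]
      by (simp add: cofactor_def cp_prod map_poly_pCons poly_prod)
  qed
  have "0 = poly (cp (wronskian P Q)) z" using z by simp
  also have "\<dots> = (\<Sum>t\<in>R. complex_of_real (w t) * (poly (cp (cofactor R t)) z)^2)"
    by (subst wronskian_sum_of_squares[OF fin P dQ])
       (simp add: w_def cp_sum cp_smult cp_power poly_sum)
  also have "\<dots> = D^2 * (\<Sum>t\<in>R. complex_of_real (w t) / (z - complex_of_real t)^2)"
    by (simp add: sum_distrib_left cof power_divide mult_ac)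
  finally have "(\<Sum>t\<in>R. complex_of_real (w t) / (z - complex_of_real t)^2) = 0"
    using D0 by simp
  hence "complex_of_real \<sigma> * (\<Sum>t\<in>R. complex_of_real (w t) / (z - complex_of_real t)^2) = 0"
    by simp
  thus "(\<Sum>t\<in>R. complex_of_real (poly (wronskian P Q) t * \<sigma> / (poly (cofactor R t) t)^2)
          / (z - complex_of_real t)^2) = 0"
    unfolding sum_distrib_left w_def by (simp add: mult_ac)
qed

section \<open>Real roots forced by sign changes\<close>

lemma root_right_of_pos:
  fixes P :: "real poly"
  assumes "poly P a < 0" "lead_coeff P > 0"
  shows "\<exists>x>a. poly P x = 0"
proof -
  obtain n where n: "\<forall>x\<ge>n. poly P x \<ge> lead_coeff P"
    using poly_pinfty_gt_lc[OF assms(2)] by blast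
  have "poly P (max n (a + 1)) > 0" using n assms(2) by (meson max.cobounded1 order.strict_trans2)
  moreover have "a < max n (a + 1)" by simp
  ultimately show ?thesis using poly_IVT_pos[of a "max n (a + 1)" P] assms(1) by auto
qed

lemma root_right_of:
  fixes P :: "real poly"
  assumes "poly P a * lead_coeff P < 0"
  shows "\<exists>x>a. poly P x = 0"
proof (cases "lead_coeff P > 0")
  case True
  thus ?thesis using assms root_right_of_pos by (simp add: mult_less_0_iff)
next
  case False
  hence "lead_coeff (-P) > 0" "poly (-P) a < 0" using assms by (auto simp: mult_less_0_iff)
  thus ?thesis using root_right_of_pos by fastforce
qed

(* The mirror image: to the left, the sign at minus infinity is that of lc(P) (-1)^deg P. *)
lemma root_left_of:
  fixes P :: "real poly"
  assumes "poly P a * lead_coeff P * (-1) ^ degree P < 0"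
  shows "\<exists>x<a. poly P x = 0"
proof -
  define Q where "Q = pcompose P [:0,-1:]"
  have pQ: "poly Q y = poly P (-y)" for y by (simp add: Q_def poly_pcompose)
  have "lead_coeff Q = lead_coeff P * (-1) ^ degree P"
    unfolding Q_def by (subst lead_coeff_comp) auto
  hence "poly Q (-a) * lead_coeff Q < 0" using assms by (simp add: pQ mult.assoc)
  then obtain y where "y > -a" "poly Q y = 0" using root_right_of by blast
  thus ?thesis by (intro exI[of _ "-y"]) (auto simp: pQ)
qed

(* P has the sign of -lc(P) at max S and changes sign between consecutive points of S. *)
definition alternating_on :: "real poly \<Rightarrow> real set \<Rightarrow> bool" where
  "alternating_on P S \<longleftrightarrow> (\<forall>s\<in>S. poly P s * lead_coeff P * (-1) ^ count_above S s < 0)"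

lemma opposite_signs:
  fixes a b c :: real
  assumes "a * c < 0" "b * c > 0"
  shows "a * b < 0"
proof -
  have "(a * b) * (c * c) < 0" using mult_neg_pos[OF assms] by (simp add: mult_ac)
  thus ?thesis by (auto simp: mult_less_0_iff)
qed

lemma alternating_root_below:
  fixes P :: "real poly"
  assumes fin: "finite S" and alt: "alternating_on P S" and deg: "degree P = card S + 1"
    and sS: "s \<in> S"
  shows "\<exists>x<s. poly P x = 0 \<and> (\<forall>u\<in>S. u < s \<longrightarrow> u < x)"
proof (cases "\<exists>u\<in>S. u < s")
  case True
  define s' where "s' = Max {u\<in>S. u < s}"
  have "s' \<in> {u\<in>S. u < s}" using True fin unfolding s'_def by (intro Max_in) auto
  hence s'S: "s' \<in> S" and s's: "s' < s" by auto
  have s'max: "\<And>u. u \<in> S \<Longrightarrow> u < s \<Longrightarrow> u \<le> s'" using fin by (simp add: s'_def)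
  have "{u\<in>S. s' < u} = insert s {u\<in>S. s < u}"
    using s's sS s'max by force
  hence above: "count_above S s' = Suc (count_above S s)"
    unfolding count_above_def using fin by (simp add: card_insert_disjoint)
  define e where "e = (-1::real) ^ count_above S s"
  have "poly P s * lead_coeff P * (-1) ^ count_above S s < 0"
    using alt sS unfolding alternating_on_def by blast
  hence "poly P s * (lead_coeff P * e) < 0" by (simp add: e_def mult.assoc)
  moreover have "poly P s' * lead_coeff P * (-1) ^ count_above S s' < 0"
    using alt s'S unfolding alternating_on_def by blast
  hence "poly P s' * (lead_coeff P * e) > 0" by (simp add: above e_def mult.assoc)
  ultimately have "poly P s' * poly P s < 0" using opposite_signs by (metis mult.commute)
  then obtain x where "s' < x" "x < s" "poly P x = 0"
    using poly_IVT[OF s's] by blast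
  thus ?thesis using s'max by (intro exI[of _ x]) force
next
  case False
  have "{u\<in>S. s < u} = S - {s}" using False by force
  moreover have "card S > 0" using fin sS card_gt_0_iff by blast
  ultimately have "Suc (count_above S s) = card S" unfolding count_above_def using fin sS by simp
  hence "degree P = Suc (Suc (count_above S s))" by (simp add: deg)
  hence "(-1::real) ^ degree P = (-1) ^ count_above S s" by simp
  hence "poly P s * lead_coeff P * (-1) ^ degree P < 0" using alt sS by (simp add: alternating_on_def)
  thus ?thesis using root_left_of False by blast
qed

lemma alternating_root_count:
  fixes P :: "real poly"
  assumes fin: "finite S" and Sne: "S \<noteq> {}" and alt: "alternating_on P S"
    and deg: "degree P = card S + 1"
  shows "card {x. poly P x = 0} = degree P"
proof -
  have P0: "P \<noteq> 0" using deg by auto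
  obtain g where g: "\<And>s. s \<in> S \<Longrightarrow> g s < s \<and> poly P (g s) = 0 \<and> (\<forall>u\<in>S. u < s \<longrightarrow> u < g s)"
    using alternating_root_below[OF fin alt deg] by metis
  have mono: "g s1 < g s2" if "s1 \<in> S" "s2 \<in> S" "s1 < s2" for s1 s2
    using g that by (meson order.strict_trans)
  have inj: "inj_on g S"
    by (rule inj_onI) (metis less_irrefl linorder_cases mono)
  define m where "m = Max S"
  have mS: "m \<in> S" and m_max: "\<And>s. s \<in> S \<Longrightarrow> s \<le> m" using fin Sne by (auto simp: m_def)
  have "{u\<in>S. m < u} = {}" using m_max by force
  hence "count_above S m = 0" unfolding count_above_def by (metis card.empty)
  moreover have "poly P m * lead_coeff P * (-1) ^ count_above S m < 0"
    using alt mS unfolding alternating_on_def by blast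
  ultimately have "poly P m * lead_coeff P < 0" by simp
  then obtain xr where xr: "xr > m" "poly P xr = 0" using root_right_of by blast
  have "xr \<notin> g ` S" using g m_max xr by (metis imageE leD less_le_trans order.strict_trans)
  hence "card (insert xr (g ` S)) = degree P" using fin inj deg by (simp add: card_image)
  moreover have "insert xr (g ` S) \<subseteq> {x. poly P x = 0}" using g xr by auto
  ultimately have "degree P \<le> card {x. poly P x = 0}"
    by (metis card_mono poly_roots_finite[OF P0])
  thus ?thesis using card_poly_roots_bound[OF P0] by simp
qed

lemma strict_sorted_nth_less_iff:
  fixes xs :: "real list"
  assumes "sorted_wrt (<) xs" "i < length xs" "j < length xs"
  shows "xs ! i < xs ! j \<longleftrightarrow> i < j"
  using assms by (metis linorder_neqE_nat order.asym sorted_wrt_nth_less)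

lemma strict_sorted_nth_le_iff:
  fixes xs :: "real list"
  assumes "sorted_wrt (<) xs" "i < length xs" "j < length xs"
  shows "xs ! i \<le> xs ! j \<longleftrightarrow> i \<le> j"
  using strict_sorted_nth_less_iff[OF assms(1,3,2)] by (simp add: not_less[symmetric])

lemma strict_sorted_within_ends:
  fixes xs :: "real list"
  assumes "sorted_wrt (<) xs" "t \<in> set xs"
  shows "xs ! 0 \<le> t \<and> t \<le> xs ! (length xs - 1)"
proof -
  obtain i where i: "i < length xs" "t = xs ! i" using assms(2) by (auto simp: in_set_conv_nth)
  have "xs ! 0 \<le> xs ! i" using strict_sorted_nth_le_iff[OF assms(1), of 0 i] i by fastforce
  moreover have "xs ! i \<le> xs ! (length xs - 1)"
    using strict_sorted_nth_le_iff[OF assms(1), of i "length xs - 1"] i by simp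
  ultimately show ?thesis using i by simp
qed

lemma strict_sorted_not_between_neighbours:
  fixes xs :: "real list"
  assumes "sorted_wrt (<) xs" "t \<in> set xs" "j + 1 < length xs"
  shows "t \<le> xs ! j \<or> xs ! (j + 1) \<le> t"
proof -
  obtain i where i: "i < length xs" "t = xs ! i" using assms(2) by (auto simp: in_set_conv_nth)
  show ?thesis
  proof (cases "i \<le> j")
    case True thus ?thesis using strict_sorted_nth_le_iff[OF assms(1), of i j] i assms(3) by simp
  next
    case False thus ?thesis using strict_sorted_nth_le_iff[OF assms(1), of "j + 1" i] i assms(3) by simp
  qed
qed

lemma count_above_sorted:
  fixes xs :: "real list"
  assumes "sorted_wrt (<) xs" and right: "\<forall>i < length xs. x < xs ! i \<longleftrightarrow> m \<le> i"
  shows "count_above (set xs) x = length xs - m"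
proof -
  have "{a\<in>set xs. x < a} = (!) xs ` {m..<length xs}"
    using right by (auto simp: in_set_conv_nth)
  moreover have "inj_on ((!) xs) {m..<length xs}"
    using assms(1) by (intro inj_on_nth) (auto simp: strict_sorted_iff)
  ultimately show ?thesis unfolding count_above_def by (simp add: card_image)
qed

lemma interlacing_at_root:
  assumes il: "strictly_interlace p q"
    and fp: "finite {x. poly p x = 0}" and fq: "finite {x. poly q x = 0}" and t: "poly p t = 0"
  shows "poly q t \<noteq> 0"
    and "count_above {x. poly q x = 0} t = count_above {x. poly p x = 0} t"
proof -
  define ps where "ps = sorted_roots p"
  define qs where "qs = sorted_roots q"
  have ps: "sorted_wrt (<) ps" "set ps = {x. poly p x = 0}"
    using fp by (simp_all add: ps_def sorted_roots_def)
  have qs: "sorted_wrt (<) qs" "set qs = {x. poly q x = 0}"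
    using fq by (simp_all add: qs_def sorted_roots_def)
  have len: "length ps = length qs + 1"
    and between: "\<And>i. i < length qs \<Longrightarrow> ps ! i < qs ! i \<and> qs ! i < ps ! (i + 1)"
    using il unfolding strictly_interlace_def Let_def ps_def[symmetric] qs_def[symmetric] by auto
  have "t \<in> set ps" using t ps(2) by simp
  then obtain j where j: "j < length ps" "t = ps ! j" unfolding in_set_conv_nth by blast
  have q_right: "t < qs ! i" if i: "i < length qs" and ji: "j \<le> i" for i
  proof -
    have "ps ! j \<le> ps ! i" using strict_sorted_nth_le_iff[OF ps(1) j(1), of i] i len ji by simp
    thus ?thesis using between[OF i] j(2) by simp
  qed
  have q_left: "qs ! i < t" if i: "i < length qs" and ij: "i < j" for i
  proof -
    have "ps ! (i + 1) \<le> ps ! j" using strict_sorted_nth_le_iff[OF ps(1) _ j(1), of "i + 1"] i len ij by simp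
    thus ?thesis using between[OF i] j(2) by simp
  qed
  show "poly q t \<noteq> 0"
  proof
    assume "poly q t = 0"
    hence "t \<in> set qs" using qs(2) by simp
    then obtain i where "i < length qs" "t = qs ! i" unfolding in_set_conv_nth by blast
    thus False using q_right q_left by (metis not_le order.irrefl)
  qed
  have "count_above (set qs) t = length qs - j"
    using q_right q_left by (intro count_above_sorted[OF qs(1)]) (meson not_le order.asym)
  moreover have "count_above (set ps) t = length ps - (j + 1)"
    using strict_sorted_nth_less_iff[OF ps(1) j(1)] j(2) by (intro count_above_sorted[OF ps(1)]) auto
  ultimately show "count_above {x. poly q x = 0} t = count_above {x. poly p x = 0} t"
    using ps(2) qs(2) len by simp
qed

section \<open>Geometry of balanced inverse squares\<close>

(* With z = x + iy and c = (a+b)/2, |c - z|^2 - ((b-a)/2)^2 = (x - a)(x - b) + y^2: the power of z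
   with respect to the circle on the diameter [a,b]. *)
lemma diam_circle_power:
  fixes a b :: real and z :: complex
  shows "cmod (complex_of_real ((a + b) / 2) - z)^2 - ((b - a) / 2)^2
         = (Re z - a) * (Re z - b) + (Im z)^2"
  unfolding cmod_power2 by (simp add: power2_eq_square field_simps)

lemma in_diam_disk_iff:
  assumes "a < b"
  shows "z \<in> diam_disk a b \<longleftrightarrow> (Re z - a) * (Re z - b) + (Im z)^2 < 0"
proof -
  have "z \<in> diam_disk a b \<longleftrightarrow> cmod (complex_of_real ((a + b) / 2) - z) < (b - a) / 2"
    by (simp add: diam_disk_def dist_norm)
  also have "\<dots> \<longleftrightarrow> cmod (complex_of_real ((a + b) / 2) - z)^2 < ((b - a) / 2)^2"
    using assms power_mono_iff[of "(b - a) / 2" "cmod (complex_of_real ((a + b) / 2) - z)" 2]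
    by (simp add: not_le[symmetric])
  finally show ?thesis using diam_circle_power[of a b z] by linarith
qed

lemma in_closed_diam_disk_iff:
  assumes "a < b"
  shows "z \<in> closure (diam_disk a b) \<longleftrightarrow> (Re z - a) * (Re z - b) + (Im z)^2 \<le> 0"
proof -
  have "z \<in> closure (diam_disk a b) \<longleftrightarrow> cmod (complex_of_real ((a + b) / 2) - z) \<le> (b - a) / 2"
    using assms by (simp add: diam_disk_def dist_norm)
  also have "\<dots> \<longleftrightarrow> cmod (complex_of_real ((a + b) / 2) - z)^2 \<le> ((b - a) / 2)^2"
    using assms by simp
  finally show ?thesis using diam_circle_power[of a b z] by linarith
qed

lemma circle_direction:
  fixes x y a b t :: real
  assumes y: "y \<noteq> 0" and on_circle: "(x - a) * (x - b) + y^2 = 0"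
  defines "\<omega> \<equiv> Complex 1 (((a + b) / 2 - x) / y)"
  shows "Re (\<omega> / (Complex x y - complex_of_real t)^2) = (t - a) * (t - b) / ((x - t)^2 + y^2)^2"
proof -
  define s where "s = ((a + b) / 2 - x) / y"
  have sy: "s * y = (a + b) / 2 - x" using y by (simp add: s_def)
  have sq: "(Complex x y - complex_of_real t)^2 = Complex ((x - t)^2 - y^2) (2 * (x - t) * y)"
    by (simp add: complex_eq_iff power2_eq_square complex_of_real_def algebra_simps)
  have den: "((x - t)^2 - y^2)^2 + (2 * (x - t) * y)^2 = ((x - t)^2 + y^2)^2"
    by (simp add: power2_eq_square algebra_simps)
  have "s * (2 * (x - t) * y) = 2 * (x - t) * (s * y)" by (simp add: algebra_simps)
  also have "\<dots> = (x - t) * (a + b - 2 * x)" by (simp add: sy field_simps)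
  finally have "s * (2 * (x - t) * y) = (x - t) * (a + b - 2 * x)" .
  moreover have "y^2 = - ((x - a) * (x - b))" using on_circle by linarith
  ultimately have num: "(x - t)^2 - y^2 + s * (2 * (x - t) * y) = (t - a) * (t - b)"
    by (simp add: power2_eq_square algebra_simps)
  show ?thesis unfolding \<omega>_def s_def[symmetric] sq using num den by (simp add: Re_divide)
qed

lemma balanced_circle_obstruction:
  fixes R :: "real set" and c :: "real \<Rightarrow> real" and z :: complex
  assumes fin: "finite R" and cpos: "\<forall>t\<in>R. c t > 0"
    and balance: "(\<Sum>t\<in>R. complex_of_real (c t) / (z - complex_of_real t)^2) = 0"
    and nonreal: "Im z \<noteq> 0" and on_circle: "(Re z - a) * (Re z - b) + (Im z)^2 = 0"
    and side: "\<forall>t\<in>R. 0 \<le> \<epsilon> * ((t - a) * (t - b))"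
    and strict: "t0 \<in> R" "0 < \<epsilon> * ((t0 - a) * (t0 - b))"
  shows False
proof -
  define \<omega> where "\<omega> = Complex 1 (((a + b) / 2 - Re z) / Im z)"
  define f where "f t = \<epsilon> * ((t - a) * (t - b)) / ((Re z - t)^2 + (Im z)^2)^2" for t
  have dir: "Re (\<omega> / (z - complex_of_real t)^2) = (t - a) * (t - b) / ((Re z - t)^2 + (Im z)^2)^2"
    for t using circle_direction[OF nonreal on_circle] by (simp add: \<omega>_def)
  have "0 = Re (complex_of_real \<epsilon> * \<omega> *
              (\<Sum>t\<in>R. complex_of_real (c t) / (z - complex_of_real t)^2))"
    using balance by simp
  also have "\<dots> = (\<Sum>t\<in>R. c t * f t)"
  proof -
    have Re_real_mult: "Re (complex_of_real r * u) = r * Re u" for r u by simp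
    have "Re (complex_of_real \<epsilon> * \<omega> * (complex_of_real (c t) / (z - complex_of_real t)^2))
          = Re (complex_of_real (\<epsilon> * c t) * (\<omega> / (z - complex_of_real t)^2))" for t
      by (simp add: mult_ac)
    also have "\<dots> t = c t * f t" for t
      unfolding Re_real_mult dir f_def by simp
    finally have "Re (complex_of_real \<epsilon> * \<omega> * (complex_of_real (c t) / (z - complex_of_real t)^2))
          = c t * f t" for t .
    thus ?thesis by (simp add: sum_distrib_left Re_sum del: times_divide_eq_right)
  qed
  also have "\<dots> > 0"
  proof (rule sum_pos2[OF fin strict(1)])
    have "(Re z - t)^2 + (Im z)^2 > 0" for t using nonreal by (simp add: add_nonneg_pos)
    hence den: "((Re z - t)^2 + (Im z)^2)^2 > 0" for t by (metis zero_less_power)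
    show "0 < c t0 * f t0" using cpos strict den[of t0] unfolding f_def by simp
    show "0 \<le> c t * f t" if "t \<in> R" for t
    proof -
      have "0 \<le> f t" unfolding f_def using side that den[of t] by (blast intro: divide_nonneg_pos)
      thus ?thesis using cpos that by (meson less_imp_le mult_nonneg_nonneg)
    qed
  qed
  finally show False by simp
qed

lemma balanced_point_outside_gap_disk:
  fixes R :: "real set" and c :: "real \<Rightarrow> real" and z :: complex
  assumes fin: "finite R" and cpos: "\<forall>t\<in>R. c t > 0"
    and balance: "(\<Sum>t\<in>R. complex_of_real (c t) / (z - complex_of_real t)^2) = 0"
    and nonreal: "Im z \<noteq> 0"
    and ab: "a \<in> R" "b \<in> R" "a < b" and gap: "\<forall>t\<in>R. t \<le> a \<or> b \<le> t"
  shows "z \<notin> diam_disk a b"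
proof
  assume "z \<in> diam_disk a b"
  hence inside: "(Re z - a) * (Re z - b) + (Im z)^2 < 0" using in_diam_disk_iff[OF ab(3)] by blast
  have y2: "(Im z)^2 > 0" using nonreal by simp
  have xa: "Re z - a > 0"
  proof (rule ccontr)
    assume "\<not> Re z - a > 0"
    hence "(Re z - a) * (Re z - b) \<ge> 0" using ab(3) by (intro mult_nonpos_nonpos) auto
    thus False using inside y2 by linarith
  qed
  (* the circle through z with diameter [a, b'] has a < b' < b *)
  define b' where "b' = Re z + (Im z)^2 / (Re z - a)"
  have circle: "(Re z - a) * (Re z - b') + (Im z)^2 = 0" using xa by (simp add: b'_def field_simps)
  have "b' - b = ((Re z - a) * (Re z - b) + (Im z)^2) / (Re z - a)"
    using xa by (simp add: b'_def field_simps)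
  moreover have "((Re z - a) * (Re z - b) + (Im z)^2) / (Re z - a) < 0"
    using inside xa by (rule divide_neg_pos)
  ultimately have b'b: "b' < b" by linarith
  have "(Im z)^2 / (Re z - a) > 0" using xa y2 by simp
  hence b'a: "a < b'" using xa by (simp add: b'_def)
  show False
  proof (rule balanced_circle_obstruction[OF fin cpos balance nonreal circle, of 1 b])
    show "\<forall>t\<in>R. 0 \<le> 1 * ((t - a) * (t - b'))"
    proof
      fix t assume "t \<in> R"
      hence "t \<le> a \<or> b \<le> t" using gap by blast
      thus "0 \<le> 1 * ((t - a) * (t - b'))"
        using b'a b'b by (auto intro: mult_nonpos_nonpos mult_nonneg_nonneg)
    qed
    show "b \<in> R" "0 < 1 * ((b - a) * (b - b'))" using ab b'b by auto
  qed
qed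

lemma balanced_point_in_hull_disk:
  fixes R :: "real set" and c :: "real \<Rightarrow> real" and z :: complex
  assumes fin: "finite R" and cpos: "\<forall>t\<in>R. c t > 0"
    and balance: "(\<Sum>t\<in>R. complex_of_real (c t) / (z - complex_of_real t)^2) = 0"
    and nonreal: "Im z \<noteq> 0"
    and ab: "a \<in> R" "b \<in> R" "a < b" and hull: "\<forall>t\<in>R. a \<le> t \<and> t \<le> b"
  shows "z \<in> closure (diam_disk a b)"
proof (rule ccontr)
  assume "z \<notin> closure (diam_disk a b)"
  hence outside: "(Re z - a) * (Re z - b) + (Im z)^2 > 0"
    using in_closed_diam_disk_iff[OF ab(3)] by simp
  have y2: "(Im z)^2 > 0" using nonreal by simp
  (* a circle through z with diameter [a', b'] strictly containing [a, b] on one side *)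
  obtain a' b' where circle: "(Re z - a') * (Re z - b') + (Im z)^2 = 0"
    and a'a: "a' \<le> a" and bb': "b \<le> b'" and strict: "a' < a \<or> b < b'"
  proof (cases "Re z > a")
    case True
    define b' where "b' = Re z + (Im z)^2 / (Re z - a)"
    have on_circle: "(Re z - a) * (Re z - b') + (Im z)^2 = 0"
      using True by (simp add: b'_def field_simps)
    have "b' - b = ((Re z - a) * (Re z - b) + (Im z)^2) / (Re z - a)"
      using True by (simp add: b'_def field_simps)
    moreover have "((Re z - a) * (Re z - b) + (Im z)^2) / (Re z - a) > 0"
      using outside True by simp
    ultimately have "b < b'" by linarith
    with on_circle show ?thesis using that[of a b'] by simp
  next
    case False
    define a' where "a' = Re z - (Im z)^2 / (b - Re z)"
    have bx: "b - Re z > 0" using False ab(3) by simp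
    have on_circle: "(Re z - a') * (Re z - b) + (Im z)^2 = 0"
      using bx by (simp add: a'_def field_simps)
    have "(Im z)^2 / (b - Re z) > 0" using bx y2 by simp
    hence "a' < a" using False by (simp add: a'_def)
    with on_circle show ?thesis using that[of a' b] by simp
  qed
  have side: "\<forall>t\<in>R. 0 \<le> -1 * ((t - a') * (t - b'))"
    using hull a'a bb' by (auto intro!: mult_nonneg_nonpos)
  from strict show False
  proof
    assume "a' < a"
    hence "0 < -1 * ((a - a') * (a - b'))" using ab bb' by (simp add: mult_pos_neg)
    thus False by (rule balanced_circle_obstruction[OF fin cpos balance nonreal circle side ab(1)])
  next
    assume "b < b'"
    hence "0 < -1 * ((b - a') * (b - b'))" using ab a'a by (simp add: mult_pos_neg)
    thus False by (rule balanced_circle_obstruction[OF fin cpos balance nonreal circle side ab(2)])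
  qed
qed

lemma wronskian_zeros_in_region:
  fixes P Q :: "real poly" and z :: complex
  assumes deg: "2 \<le> degree P" and split: "card {x. poly P x = 0} = degree P"
    and dQ: "degree Q < degree P"
    and sign: "\<forall>t. poly P t = 0 \<longrightarrow> poly (wronskian P Q) t * \<sigma> > 0"
    and z: "poly (cp (wronskian P Q)) z = 0"
  shows "z \<in> (let r = sorted_roots P; n = length r in
               closure (diam_disk (r ! 0) (r ! (n - 1))) -
               (\<Union>j \<in> {0..<n - 1}. diam_disk (r ! j) (r ! (j + 1))))"
proof -
  define R where "R = {x. poly P x = 0}"
  define r where "r = sorted_roots P"
  define n where "n = degree P"
  have P0: "P \<noteq> 0" using deg by auto
  have fin: "finite R" using poly_roots_finite[OF P0] by (simp add: R_def)
  have P: "P = smult (lead_coeff P) (\<Prod>u\<in>R. [:-u,1:])"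
    unfolding R_def by (rule factor_by_roots[OF P0 split])
  have dQR: "degree Q < card R" using dQ split by (simp add: R_def)
  have signR: "\<forall>t\<in>R. poly (wronskian P Q) t * \<sigma> > 0" using sign by (simp add: R_def)
  define c where "c t = poly (wronskian P Q) t * \<sigma> / (poly (cofactor R t) t)^2" for t
  have cpos: "\<forall>t\<in>R. c t > 0" using signR cofactor_at_own_root[OF fin] by (simp add: c_def)
  note nonreal = wronskian_complex_zero(1)[OF fin P dQR signR z]
  have balance: "(\<Sum>t\<in>R. complex_of_real (c t) / (z - complex_of_real t)^2) = 0"
    unfolding c_def by (rule wronskian_complex_zero(2)[OF fin P dQR signR z])
  have r: "sorted_wrt (<) r" "set r = R" "length r = n"
    using fin split by (simp_all add: r_def sorted_roots_def R_def n_def)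
  have r_in: "r ! i \<in> R" if "i < n" for i using r that by (metis nth_mem)
  have hull: "z \<in> closure (diam_disk (r ! 0) (r ! (n - 1)))"
  proof (rule balanced_point_in_hull_disk[OF fin cpos balance nonreal r_in r_in])
    show "r ! 0 < r ! (n - 1)" using strict_sorted_nth_less_iff[OF r(1)] r(3) deg n_def by simp
    show "\<forall>t\<in>R. r ! 0 \<le> t \<and> t \<le> r ! (n - 1)"
      using strict_sorted_within_ends[OF r(1)] r(2,3) by blast
  qed (use deg n_def in auto)
  have gap: "z \<notin> diam_disk (r ! j) (r ! (j + 1))" if j: "j < n - 1" for j
  proof (rule balanced_point_outside_gap_disk[OF fin cpos balance nonreal r_in r_in])
    show "r ! j < r ! (j + 1)" using strict_sorted_nth_less_iff[OF r(1)] r(3) j by simp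
    show "\<forall>t\<in>R. t \<le> r ! j \<or> r ! (j + 1) \<le> t"
      using strict_sorted_not_between_neighbours[OF r(1)] r(2,3) j by auto
  qed (use j in auto)
  show ?thesis using hull gap by (simp add: Let_def r_def[symmetric] r(3))
qed

lemma interlacing_wronskian_definite:
  fixes p q :: "real poly"
  assumes "2 \<le> k" "degree p = k" "degree q = k - 1"
    and rsr_p: "real_simple_rooted p" and rsr_q: "real_simple_rooted q"
    and il: "strictly_interlace p q"
  shows "poly (wronskian p q) x * (lead_coeff p * lead_coeff q) > 0"
proof -
  define Rp where "Rp = {x. poly p x = 0}"
  define Rq where "Rq = {x. poly q x = 0}"
  define L where "L = lead_coeff p"
  define M where "M = lead_coeff q"
  note fp = real_simple_rooted_factor[OF rsr_p, folded Rp_def L_def]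
  note fq = real_simple_rooted_factor[OF rsr_q, folded Rq_def M_def]
  have L0: "L \<noteq> 0" and M0: "M \<noteq> 0"
    using rsr_p rsr_q by (simp_all add: real_simple_rooted_def L_def M_def)
  have "poly (wronskian p q) t * (L * M) > 0" if t: "t \<in> Rp" for t
  proof -
    define e where "e = (-1::real) ^ count_above Rp t"
    have "t \<notin> Rq" and same: "count_above Rq t = count_above Rp t"
      using interlacing_at_root[OF il, of t] fp(1) fq(1) t unfolding Rp_def Rq_def by auto
    have "poly (pderiv p) t * L * e > 0"
      unfolding e_def by (rule pderiv_sign_at_root[OF fp(1) t fp(3) L0])
    moreover have "poly q t * M * e > 0"
      unfolding e_def same[symmetric] by (rule poly_sign_off_roots[OF fq(1) \<open>t \<notin> Rq\<close> fq(3) M0])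
    ultimately have "0 < (poly (pderiv p) t * L * e) * (poly q t * M * e)" by (rule mult_pos_pos)
    also have "\<dots> = poly (pderiv p) t * poly q t * (L * M) * (e * e)" by (simp only: mult_ac)
    also have "\<dots> = poly (wronskian p q) t * (L * M)"
      using t neg_one_power_square[of "count_above Rp t"]
      by (simp add: e_def wronskian_def Rp_def)
    finally show ?thesis .
  qed
  moreover have "degree q < card Rp" using assms(1-3) fp(2) by simp
  ultimately show ?thesis unfolding L_def[symmetric] M_def[symmetric]
    using wronskian_definite[OF fp(1) fp(3)] by blast
qed

(* If lc(P) lc(q) W(P,q) > 0 on the real line and q has simple real roots, then P alternates
   in sign at the roots of q and therefore has deg P distinct real roots. *)
lemma definite_wronskian_real_rooted:
  fixes P q :: "real poly"
  assumes rsr_q: "real_simple_rooted q" and degq: "1 \<le> degree q"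
    and degP: "degree P = degree q + 1"
    and definite: "\<And>x. poly (wronskian P q) x * (lead_coeff P * lead_coeff q) > 0"
  shows "card {x. poly P x = 0} = degree P"
proof -
  define Rq where "Rq = {x. poly q x = 0}"
  define M where "M = lead_coeff q"
  note fq = real_simple_rooted_factor[OF rsr_q, folded Rq_def M_def]
  have M0: "M \<noteq> 0" using rsr_q by (simp add: real_simple_rooted_def M_def)
  have "alternating_on P Rq"
    unfolding alternating_on_def
  proof
    fix s assume s: "s \<in> Rq"
    define e where "e = (-1::real) ^ count_above Rq s"
    have pos: "poly (pderiv q) s * M * e > 0"
      unfolding e_def by (rule pderiv_sign_at_root[OF fq(1) s fq(3) M0])
    have W: "poly (wronskian P q) s = - (poly (pderiv q) s * poly P s)"
      using s by (simp add: wronskian_def Rq_def)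
    have "(poly (pderiv q) s * M * e) * (poly P s * lead_coeff P * e)
        = (poly (pderiv q) s * poly P s) * (lead_coeff P * M) * (e * e)" by (simp only: mult_ac)
    also have "\<dots> = - (poly (wronskian P q) s * (lead_coeff P * lead_coeff q))"
      using W neg_one_power_square[of "count_above Rq s"] by (simp add: e_def M_def)
    also have "\<dots> < 0" using definite[of s] by simp
    finally have "(poly (pderiv q) s * M * e) * (poly P s * lead_coeff P * e) < 0" .
    thus "poly P s * lead_coeff P * (-1) ^ count_above Rq s < 0"
      using pos unfolding e_def by (rule neg_by_pos_factor)
  qed
  moreover have "Rq \<noteq> {}" using fq(2) degq by auto
  ultimately show ?thesis using alternating_root_count[OF fq(1)] fq(2) degP by simp
qed

theorem mainTheorem2:
  fixes p q :: "real poly" and k :: nat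
  assumes "k \<ge> 2"
    and "degree p = k" and "degree q = k - 1"
    and "real_simple_rooted p" and "real_simple_rooted q"
    and "strictly_interlace p q"
  shows "\<forall>z. poly (map_poly complex_of_real (wronskian p q)) z = 0 \<longrightarrow>
           z \<in> (\<Inter>\<alpha>. Omega p q \<alpha>)"
proof (intro allI impI INT_I)
  fix z :: complex and \<alpha> :: real
  assume z: "poly (cp (wronskian p q)) z = 0"
  define P where "P = p + smult \<alpha> q"
  have small: "degree (smult \<alpha> q) < degree p" using assms(1-3) degree_smult_le[of \<alpha> q] by linarith
  have degP: "degree P = k" using degree_add_eq_left[OF small] assms(2) by (simp add: P_def)
  have lcP: "lead_coeff P = lead_coeff p"
    using lead_coeff_add_le[OF small] by (simp add: P_def add.commute)
  have W: "wronskian P q = wronskian p q" unfolding P_def by (rule wronskian_pencil)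
  have definite: "poly (wronskian P q) x * (lead_coeff P * lead_coeff q) > 0" for x
    unfolding W lcP by (rule interlacing_wronskian_definite[OF assms])
  have roots: "card {x. poly P x = 0} = degree P"
    using definite_wronskian_real_rooted[OF assms(5) _ _ definite] assms(1,3) degP by simp
  have "z \<in> (let r = sorted_roots P; n = length r in
               closure (diam_disk (r ! 0) (r ! (n - 1))) -
               (\<Union>j \<in> {0..<n - 1}. diam_disk (r ! j) (r ! (j + 1))))"
    using wronskian_zeros_in_region[where \<sigma> = "lead_coeff P * lead_coeff q", OF _ roots _ _ z[folded W]]
      definite assms(1,3) degP by simp
  thus "z \<in> Omega p q \<alpha>" by (simp add: Omega_def P_def)
qed

end
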